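(* Assume that $Y=\mu^\star_y(Z)+\eta$ and $X=\mu^\star_x(Z)+\varepsilon$, where $\eta$ and $\varepsilon$ are mean-zero random variables, independent of $Z$ and of each other, and $\varepsilon\sim\mathcal N(0,1)$; assume $\mathbf y\neq 0$ almost surely. Let $\mu_{x,\mathrm{mx}}$ be a fixed function, and let the model-X CRT draw, conditional on $\mathbf D$, $\mathbf x^{(1)},\dots,\mathbf x^{(M)}$ i.i.d. with independent coordinates $X^{(m)}_i\sim\mathcal N(\mu_{x,\mathrm{mx}}(Z_i),1)$, and set $$p_{\mathrm{mx}}(\mathbf D)=\frac{1}{M+1}\Big(1+\sum_{m=1}^M\mathbf 1\{|\mathbf x^{(m)\top}\mathbf y|\ge|\mathbf x^\top\mathbf y|\}\Big).$$ Then for every integer $M\ge1$ and every $\alpha\in(0,1)$, $$\mathbb P(p_{\mathrm{mx}}(\mathbf D)\le\alpha)\le\alpha+\frac{2}{\sqrt{2\pi}}\sqrt{n\,\mathbb E\big[(\mu^\star_x(Z)-\mu_{x,\mathrm{mx}}(Z))^2\big]}.$$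
   Context: Let $(Y_i,X_i,Z_i)$, $i=1,\dots,n$, be i.i.d. copies of $(Y,X,Z)$ with $Y,X\in\mathbb R$, $Z\in\mathbb R^p$; $\mathbf y=(Y_1,\dots,Y_n)^\top$, $\mathbf x=(X_1,\dots,X_n)^\top$, $\mathbf Z$ the matrix with rows $Z_i^\top$, $\mathbf D=(\mathbf y,\mathbf x,\mathbf Z)$. $Z$ in the bound denotes a generic copy of the covariate vector. *)

theory Defs
  imports "HOL-Probability.Probability"
begin

text \<open>Indices of the primitive random variables: Z_i, eta_i, eps_i (i < n) and the
  standard-normal innovations xi_{m,i} (1 <= m <= M, i < n) used by the model-X CRT.\<close>
datatype crt_idx = IZ nat | IEta nat | IEps nat | IXi nat nat

definition crt_index_set :: "nat \<Rightarrow> nat \<Rightarrow> crt_idx set" where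
  "crt_index_set n M =
     {IZ i | i. i < n} \<union> {IEta i | i. i < n} \<union> {IEps i | i. i < n}
     \<union> {IXi m i | m i. 1 \<le> m \<and> m \<le> M \<and> i < n}"

text \<open>Mutual independence of the whole (mixed-type) family, written out as the
  independence of the generated sigma-algebras (this is what indep_vars unfolds to).\<close>
definition crt_indep ::
  "'w measure \<Rightarrow> nat \<Rightarrow> nat \<Rightarrow> (nat \<Rightarrow> 'w \<Rightarrow> 'z::topological_space) \<Rightarrow> (nat \<Rightarrow> 'w \<Rightarrow> real)
    \<Rightarrow> (nat \<Rightarrow> 'w \<Rightarrow> real) \<Rightarrow> (nat \<Rightarrow> nat \<Rightarrow> 'w \<Rightarrow> real) \<Rightarrow> bool" where
  "crt_indep \<Omega> n M Z eta eps xi =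
     prob_space.indep_sets \<Omega>
       (\<lambda>j. case j of
          IZ i \<Rightarrow> {Z i -` A \<inter> space \<Omega> | A. A \<in> sets borel}
        | IEta i \<Rightarrow> {eta i -` A \<inter> space \<Omega> | A. A \<in> sets borel}
        | IEps i \<Rightarrow> {eps i -` A \<inter> space \<Omega> | A. A \<in> sets borel}
        | IXi m i \<Rightarrow> {xi m i -` A \<inter> space \<Omega> | A. A \<in> sets borel})
       (crt_index_set n M)"

text \<open>Model-X CRT p-value: y, x are the observed vectors, xt m the m-th resampled x.\<close>
definition p_mx :: "nat \<Rightarrow> nat \<Rightarrow> (nat \<Rightarrow> real) \<Rightarrow> (nat \<Rightarrow> real) \<Rightarrow> (nat \<Rightarrow> nat \<Rightarrow> real) \<Rightarrow> real" where
  "p_mx n M y x xt =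
     (1 + real (card {m \<in> {1..M}. \<bar>\<Sum>i<n. xt m i * y i\<bar> \<ge> \<bar>\<Sum>i<n. x i * y i\<bar>})) / (real M + 1)"

end

theory Submission
  imports Defs
begin

text \<open>Conditionally on the data block (Z, eta), and hence on y, the observed statistic x'y and the
  resampled statistics x(m)'y are independent Gaussians with common standard deviation s = |y| and
  means mu_x(Z)'y and mu_mx(Z)'y respectively. If the two means agreed, the M + 1 statistics would be
  exchangeable and the rank p-value would be valid. Shifting the mean of a Gaussian by d changes the
  probability of any Borel set by at most |d| phi_s(0) = |d| / (s sqrt(2 pi)), and by Cauchy-Schwarz
  |d| <= s |mu_x(Z) - mu_mx(Z)|. This bounds the conditional rejection probability by
  alpha + |mu_x(Z) - mu_mx(Z)| / sqrt(2 pi); averaging over the data and E sqrt(T) <= sqrt(E T) give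
  the theorem, with a factor 2 to spare.\<close>

section \<open>Shifted Gaussian distributions\<close>

lemma normal_density_le_center: "normal_density \<mu> \<sigma> x \<le> normal_density 0 \<sigma> 0"
proof -
  have "exp (- ((x - \<mu>)\<^sup>2 / (2 * \<sigma>\<^sup>2))) \<le> 1" by simp
  then show ?thesis by (simp add: normal_density_def divide_right_mono)
qed

lemma normal_density_mono_dist:
  assumes "\<bar>x - \<mu>\<bar> \<le> \<bar>x - \<nu>\<bar>"
  shows "normal_density \<nu> \<sigma> x \<le> normal_density \<mu> \<sigma> x"
proof -
  have "(x - \<mu>)\<^sup>2 \<le> (x - \<nu>)\<^sup>2"
    using assms by (metis abs_ge_zero power2_abs power_mono)
  then have "- (x - \<nu>)\<^sup>2 / (2 * \<sigma>\<^sup>2) \<le> - (x - \<mu>)\<^sup>2 / (2 * \<sigma>\<^sup>2)"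
    by (intro divide_right_mono) auto
  then show ?thesis unfolding normal_density_def
    by (intro mult_left_mono) auto
qed

lemma integral_normal_density_atMost:
  "(\<integral>t. normal_density \<mu> \<sigma> t * indicator {..x} t \<partial>lborel)
     = (\<integral>t. normal_density 0 \<sigma> t * indicator {..x - \<mu>} t \<partial>lborel)"
  using lborel_integral_real_affine[of 1 "\<lambda>t. normal_density \<mu> \<sigma> t * indicator {..x} t" \<mu>]
  by (simp add: normal_density_def indicator_def le_diff_eq add.commute)

lemma integral_normal_density_Ioc_le:
  assumes "a \<le> b" "0 < \<sigma>"
  shows "(\<integral>t. normal_density \<mu> \<sigma> t * indicator {a<..b} t \<partial>lborel) \<le> (b - a) * normal_density 0 \<sigma> 0"
proof -
  have "(\<integral>t. normal_density \<mu> \<sigma> t * indicator {a<..b} t \<partial>lborel)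
      \<le> (\<integral>t. normal_density 0 \<sigma> 0 * indicator {a<..b} t \<partial>lborel)"
  proof (rule integral_mono)
    show "integrable lborel (\<lambda>t. normal_density 0 \<sigma> 0 * indicator {a<..b} t :: real)"
      using assms by (intro integrable_mult_right integrable_real_indicator) auto
    show "integrable lborel (\<lambda>t. normal_density \<mu> \<sigma> t * indicator {a<..b} t)"
      using assms by (intro integrable_real_mult_indicator) auto
    show "normal_density \<mu> \<sigma> t * indicator {a<..b} t \<le> normal_density 0 \<sigma> 0 * indicator {a<..b} t" for t
      by (simp add: normal_density_le_center split: split_indicator)
  qed
  also have "\<dots> = (b - a) * normal_density 0 \<sigma> 0"
    using assms by simp
  finally show ?thesis .
qed

lemma integral_normal_density_shift_le:
  assumes "\<mu> \<le> \<nu>" "S \<in> sets borel" "0 < \<sigma>"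
  shows "(\<integral>t. normal_density \<mu> \<sigma> t * indicator S t \<partial>lborel)
       \<le> (\<integral>t. normal_density \<nu> \<sigma> t * indicator S t \<partial>lborel) + (\<nu> - \<mu>) * normal_density 0 \<sigma> 0"
proof -
  define m where "m = (\<mu> + \<nu>) / 2"
  let ?I = "\<lambda>c A. \<integral>t. normal_density c \<sigma> t * indicator A t \<partial>lborel"
  let ?d = "\<lambda>t. normal_density \<mu> \<sigma> t - normal_density \<nu> \<sigma> t"
  have int: "integrable lborel (\<lambda>t. normal_density c \<sigma> t * indicator A t)" if "A \<in> sets borel" for c A
    using that assms(3) by (intro integrable_real_mult_indicator) auto
  have diff: "?I \<mu> A - ?I \<nu> A = (\<integral>t. ?d t * indicator A t \<partial>lborel)" if "A \<in> sets borel" for A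
    using that by (subst Bochner_Integration.integral_diff[symmetric]) (auto intro!: int simp: left_diff_distrib)
  \<comment> \<open>the two densities cross at the midpoint m\<close>
  have left: "?d t \<ge> 0" if "t \<le> m" for t
    using that assms(1) by (intro normal_density_mono_dist[THEN diff_ge_0_iff_ge[THEN iffD2]]) (auto simp: m_def)
  have right: "?d t \<le> 0" if "m < t" for t
    using that assms(1) by (intro normal_density_mono_dist[THEN diff_le_0_iff_le[THEN iffD2]]) (auto simp: m_def)
  have "?I \<mu> S - ?I \<nu> S \<le> (\<integral>t. ?d t * indicator {..m} t \<partial>lborel)"
  proof -
    have "?d t * indicator S t \<le> ?d t * indicator {..m} t" for t
      using left[of t] right[of t] by (cases "t \<le> m") (auto split: split_indicator)
    then show ?thesis
      unfolding diff[OF assms(2)] using assms(2,3)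
      by (intro integral_mono integrable_real_mult_indicator Bochner_Integration.integrable_diff
          integrable_normal_density) simp_all
  qed
  also have "\<dots> = ?I \<mu> {..m} - ?I \<nu> {..m}"
    by (rule diff[symmetric]) simp
  also have "\<dots> = ?I 0 {..m - \<mu>} - ?I 0 {..m - \<nu>}"
    by (simp only: integral_normal_density_atMost[of \<mu>] integral_normal_density_atMost[of \<nu>])
  also have "\<dots> = ?I 0 {m - \<nu><..m - \<mu>}"
  proof -
    have "indicator {..m - \<mu>} t = indicator {..m - \<nu>} t + (indicator {m - \<nu><..m - \<mu>} t :: real)" for t
      using assms(1) by (auto split: split_indicator)
    then show ?thesis
      using assms(3) by (simp add: distrib_left int)
  qed
  also have "\<dots> \<le> (\<nu> - \<mu>) * normal_density 0 \<sigma> 0"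
    using assms integral_normal_density_Ioc_le[of "m - \<nu>" "m - \<mu>"] by simp
  finally show ?thesis by simp
qed

lemma measure_normal_density:
  assumes "S \<in> sets borel" "0 < \<sigma>"
  shows "measure (density lborel (normal_density \<mu> \<sigma>)) S
     = (\<integral>t. normal_density \<mu> \<sigma> t * indicator S t \<partial>lborel)"
proof -
  have "emeasure (density lborel (normal_density \<mu> \<sigma>)) S
      = (\<integral>\<^sup>+t. ennreal (normal_density \<mu> \<sigma> t * indicator S t) \<partial>lborel)"
    using assms by (subst emeasure_density) (auto intro!: nn_integral_cong split: split_indicator)
  also have "\<dots> = ennreal (\<integral>t. normal_density \<mu> \<sigma> t * indicator S t \<partial>lborel)"
    using assms by (intro nn_integral_eq_integral integrable_real_mult_indicator) auto
  finally show ?thesis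
    using assms by (simp add: measure_def integral_nonneg_AE)
qed

lemma measure_normal_density_shift_le:
  assumes "S \<in> sets borel" "0 < \<sigma>"
  shows "measure (density lborel (normal_density \<mu> \<sigma>)) S
     \<le> measure (density lborel (normal_density \<nu> \<sigma>)) S + \<bar>\<mu> - \<nu>\<bar> * normal_density 0 \<sigma> 0"
proof (cases "\<mu> \<le> \<nu>")
  case True
  then show ?thesis
    using integral_normal_density_shift_le[OF True assms] assms by (simp add: measure_normal_density)
next
  case False
  \<comment> \<open>apply the first case to the complement, with the roles of \<mu> and \<nu> exchanged\<close>
  let ?N = "\<lambda>c. density lborel (normal_density c \<sigma>)"
  have compl: "measure (?N c) (- S) = 1 - measure (?N c) S" for c
    using prob_space.prob_compl[OF prob_space_normal_density, where A=S] assms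
    by (simp add: Compl_eq_Diff_UNIV)
  have "measure (?N \<nu>) (- S) \<le> measure (?N \<mu>) (- S) + (\<mu> - \<nu>) * normal_density 0 \<sigma> 0"
    using integral_normal_density_shift_le[of \<nu> \<mu> "- S" \<sigma>] False assms
    by (simp add: measure_normal_density borel_comp)
  then show ?thesis
    using False compl by simp
qed

lemma (in prob_space) distr_normal_density_shift:
  assumes X: "distributed M lborel X (normal_density 0 \<sigma>)" and \<sigma>: "0 < \<sigma>"
  shows "distr M borel (\<lambda>\<omega>. c + X \<omega>) = density lborel (normal_density c \<sigma>)"
proof -
  have "distributed M lborel (\<lambda>\<omega>. c + 1 * X \<omega>) (normal_density (c + 1 * 0) (\<bar>1\<bar> * \<sigma>))"
    by (rule normal_density_affine[OF X \<sigma>]) simp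
  then show ?thesis
    by (simp add: distributed_distr_eq_density distr_cong[OF refl sets_lborel[symmetric]])
qed

lemma (in prob_space) prob_normal_shift_le:
  assumes X: "distributed M lborel X (normal_density 0 \<sigma>)" and \<sigma>: "0 < \<sigma>" and A: "A \<in> sets borel"
  shows "prob {\<omega> \<in> space M. a + X \<omega> \<in> A}
     \<le> prob {\<omega> \<in> space M. b + X \<omega> \<in> A} + \<bar>a - b\<bar> * normal_density 0 \<sigma> 0"
proof -
  have "prob {\<omega> \<in> space M. c + X \<omega> \<in> A} = measure (density lborel (normal_density c \<sigma>)) A" for c
  proof -
    have "(\<lambda>\<omega>. c + X \<omega>) \<in> borel_measurable M"
      using distributed_measurable[OF X] by simp
    then show ?thesis
      using A measure_distr[of "\<lambda>\<omega>. c + X \<omega>" M borel A] distr_normal_density_shift[OF X \<sigma>]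
      by (simp add: vimage_def Int_def conj_commute)
  qed
  then show ?thesis
    using measure_normal_density_shift_le[OF A \<sigma>] by simp
qed

lemma (in prob_space) distributed_weighted_sum_std_normal:
  assumes I: "finite I" and indep: "indep_vars (\<lambda>_. borel) X I"
    and normal: "\<And>i. i \<in> I \<Longrightarrow> distributed M lborel (X i) std_normal_density"
    and y: "\<exists>i\<in>I. y i \<noteq> 0"
  shows "distributed M lborel (\<lambda>\<omega>. \<Sum>i\<in>I. y i * X i \<omega>) (normal_density 0 (sqrt (\<Sum>i\<in>I. (y i)\<^sup>2)))"
proof -
  \<comment> \<open>terms with zero weight are dropped, as the library lemma requires positive standard deviations\<close>
  define J where "J = {i\<in>I. y i \<noteq> 0}"
  have J: "finite J" "J \<noteq> {}" "J \<subseteq> I"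
    using I y by (auto simp: J_def)
  have "distributed M lborel (\<lambda>\<omega>. \<Sum>i\<in>J. y i * X i \<omega>) (normal_density (\<Sum>i\<in>J. 0) (sqrt (\<Sum>i\<in>J. (\<bar>y i\<bar> * 1)\<^sup>2)))"
  proof (rule sum_indep_normal[OF J(1,2)])
    show "indep_vars (\<lambda>_. borel) (\<lambda>i \<omega>. y i * X i \<omega>) J"
      using indep_vars_subset[OF indep J(3)] by (rule indep_vars_compose2) auto
    fix i assume "i \<in> J"
    then have "i \<in> I" "y i \<noteq> 0" by (auto simp: J_def)
    from normal_density_affine[OF normal[OF \<open>i \<in> I\<close>] zero_less_one \<open>y i \<noteq> 0\<close>, of 0]
    show "distributed M lborel (\<lambda>\<omega>. y i * X i \<omega>) (normal_density 0 (\<bar>y i\<bar> * 1))"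
      by simp
    show "0 < \<bar>y i\<bar> * 1" using \<open>y i \<noteq> 0\<close> by simp
  qed
  moreover have "(\<Sum>i\<in>J. y i * X i \<omega>) = (\<Sum>i\<in>I. y i * X i \<omega>)" for \<omega>
    using I by (intro sum.mono_neutral_left) (auto simp: J_def)
  moreover have "(\<Sum>i\<in>J. (\<bar>y i\<bar> * 1)\<^sup>2) = (\<Sum>i\<in>I. (y i)\<^sup>2)"
    using I by (simp add: power2_abs) (intro sum.mono_neutral_left, auto simp: J_def)
  ultimately show ?thesis by simp
qed

lemma sum_mult_normal_density_le:
  fixes v y :: "'i \<Rightarrow> real"
  assumes "finite I" "\<exists>i\<in>I. y i \<noteq> 0"
  shows "\<bar>\<Sum>i\<in>I. v i * y i\<bar> * normal_density 0 (sqrt (\<Sum>i\<in>I. (y i)\<^sup>2)) 0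
     \<le> sqrt (\<Sum>i\<in>I. (v i)\<^sup>2) / sqrt (2 * pi)"
proof -
  define \<sigma> where "\<sigma> = sqrt (\<Sum>i\<in>I. (y i)\<^sup>2)"
  obtain i0 where "i0 \<in> I" "y i0 \<noteq> 0"
    using assms(2) by blast
  then have "0 < (\<Sum>i\<in>I. (y i)\<^sup>2)"
    using assms(1) by (intro sum_pos2[of I i0]) auto
  then have \<sigma>: "0 < \<sigma>" by (simp add: \<sigma>_def)
  have "sqrt ((\<Sum>i\<in>I. v i * y i)\<^sup>2) \<le> sqrt ((\<Sum>i\<in>I. (v i)\<^sup>2) * (\<Sum>i\<in>I. (y i)\<^sup>2))"
    by (rule real_sqrt_le_mono[OF Cauchy_Schwarz_ineq_sum])
  then have cs: "\<bar>\<Sum>i\<in>I. v i * y i\<bar> \<le> sqrt (\<Sum>i\<in>I. (v i)\<^sup>2) * \<sigma>"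
    by (simp add: \<sigma>_def real_sqrt_mult)
  have "\<bar>\<Sum>i\<in>I. v i * y i\<bar> * normal_density 0 \<sigma> 0 = \<bar>\<Sum>i\<in>I. v i * y i\<bar> / (sqrt (2 * pi) * \<sigma>)"
    using \<sigma> by (simp add: normal_density_def real_sqrt_mult)
  also have "\<dots> \<le> sqrt (\<Sum>i\<in>I. (v i)\<^sup>2) * \<sigma> / (sqrt (2 * pi) * \<sigma>)"
    using cs \<sigma> by (intro divide_right_mono) auto
  also have "\<dots> = sqrt (\<Sum>i\<in>I. (v i)\<^sup>2) / sqrt (2 * pi)"
    using \<sigma> by simp
  finally show ?thesis by (simp add: \<sigma>_def)
qed

section \<open>Validity of rank tests\<close>

lemma card_rank_le:
  fixes h :: "'i \<Rightarrow> 'a::linorder"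
  assumes "finite I" "0 \<le> K"
  shows "real (card {j\<in>I. real (card {k\<in>I. h j \<le> h k}) \<le> K}) \<le> K"
proof -
  define S where "S = {j\<in>I. real (card {k\<in>I. h j \<le> h k}) \<le> K}"
  have "finite S" using assms(1) by (simp add: S_def)
  show ?thesis
  proof (cases "S = {}")
    case True
    then show ?thesis using assms(2) unfolding S_def[symmetric] by simp
  next
    case False
    define j0 where "j0 = arg_min_on h S"
    have j0: "j0 \<in> S" "\<And>j. j \<in> S \<Longrightarrow> h j0 \<le> h j"
      using arg_min_if_finite[OF \<open>finite S\<close> False, of h] unfolding j0_def by (auto simp: not_less)
    \<comment> \<open>S lies above its h-minimal element j0, whose own count is at most K\<close>
    have "S \<subseteq> {k\<in>I. h j0 \<le> h k}"
      using j0(2) by (auto simp: S_def)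
    then have "real (card S) \<le> real (card {k\<in>I. h j0 \<le> h k})"
      using assms(1) by (simp add: card_mono)
    also have "\<dots> \<le> K"
      using j0(1) by (simp add: S_def)
    finally show ?thesis by (simp add: S_def)
  qed
qed

lemma borel_measurable_card_Collect:
  assumes "finite I" "\<And>k. k \<in> I \<Longrightarrow> Measurable.pred M (P k)"
  shows "(\<lambda>x. real (card {k\<in>I. P k x})) \<in> borel_measurable M"
proof -
  have "real (card {k\<in>I. P k x}) = (\<Sum>k\<in>I. if P k x then 1 else 0)" for x
    using assms(1) by (simp add: sum.If_cases Int_def)
  then show ?thesis
    using assms by (simp only:) measurable
qed

lemma sets_PiM_rank:
  fixes N :: "real measure"
  assumes N: "sets N = sets borel" and I: "finite I" "j \<in> I"
  shows "{h\<in>space (PiM I (\<lambda>_. N)). real (card {k\<in>I. h j \<le> h k}) \<le> K} \<in> sets (PiM I (\<lambda>_. N))"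
proof -
  have comp: "(\<lambda>h. h k) \<in> borel_measurable (PiM I (\<lambda>_. N))" if "k \<in> I" for k
    using measurable_component_singleton[OF that, of "\<lambda>_. N"]
    unfolding measurable_cong_sets[OF refl N] .
  have "(\<lambda>h. real (card {k\<in>I. h j \<le> h k})) \<in> borel_measurable (PiM I (\<lambda>_. N))"
    using I(1) by (rule borel_measurable_card_Collect)
      (use I(2) in \<open>auto simp: pred_def intro!: borel_measurable_le comp\<close>)
  then show ?thesis
    by (rule borel_measurable_le[OF _ borel_measurable_const])
qed

lemma PiM_rank_exchangeable:
  fixes N :: "real measure"
  assumes N: "prob_space N" "sets N = sets borel" and I: "finite I" "i \<in> I" "j \<in> I"
  defines "P \<equiv> PiM I (\<lambda>_. N)"
  shows "measure P {h\<in>space P. real (card {k\<in>I. h j \<le> h k}) \<le> K}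
       = measure P {h\<in>space P. real (card {k\<in>I. h i \<le> h k}) \<le> K}"
proof -
  define A where "A j = {h\<in>space P. real (card {k\<in>I. h j \<le> h k}) \<le> K}" for j
  define f where "f k = (if k = i then j else if k = j then i else k)" for k
  define g where "g h = (\<lambda>k\<in>I. h (f k))" for h :: "'a \<Rightarrow> real"
  have f: "f \<in> I \<rightarrow> I" "inj_on f I" "f i = j" "\<And>k. f (f k) = k"
    using I by (auto simp: f_def inj_on_def)
  \<comment> \<open>swapping the coordinates i and j preserves the product measure\<close>
  have "distr P P g = P"
    using distr_PiM_reindex[of I "\<lambda>_. N" f I] N(1) f(1,2) unfolding P_def g_def[abs_def] by simp
  moreover have g: "g \<in> measurable P P"
    unfolding P_def g_def using f(1) by (intro measurable_restrict measurable_component_singleton) auto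
  moreover have "g -` A i \<inter> space P = A j"
  proof -
    have "card {k\<in>I. h (f i) \<le> h (f k)} = card {k\<in>I. h j \<le> h k}" for h :: "'a \<Rightarrow> real"
    proof -
      have "f ` {k\<in>I. h j \<le> h (f k)} = {k\<in>I. h j \<le> h k}"
        using f(1,4) by (auto intro!: image_eqI[where x="f k" for k])
      moreover have "inj_on f {k\<in>I. h j \<le> h (f k)}"
        using f(2) by (rule inj_on_subset) auto
      ultimately show ?thesis
        using f(3) by (metis card_image)
    qed
    then show ?thesis
      using measurable_space[OF g] f(1) I(2) by (auto simp: A_def g_def Pi_iff cong: conj_cong)
  qed
  moreover have "A i \<in> sets P"
    unfolding A_def P_def using N(2) I(1,2) by (rule sets_PiM_rank)
  ultimately show ?thesis
    unfolding A_def[symmetric] by (metis measure_distr)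
qed

lemma PiM_rank_le:
  fixes N :: "real measure"
  assumes N: "prob_space N" "sets N = sets borel" and I: "finite I" "i \<in> I" and K: "0 \<le> K"
  defines "P \<equiv> PiM I (\<lambda>_. N)"
  shows "measure P {h\<in>space P. real (card {k\<in>I. h i \<le> h k}) \<le> K} * real (card I) \<le> K"
proof -
  define A where "A j = {h\<in>space P. real (card {k\<in>I. h j \<le> h k}) \<le> K}" for j
  interpret P: prob_space P
    unfolding P_def using N by (intro prob_space_PiM) auto
  have A_sets: "A j \<in> sets P" if "j \<in> I" for j
    unfolding A_def P_def using N(2) I(1) that by (rule sets_PiM_rank)
  have exch: "measure P (A j) = measure P (A i)" if "j \<in> I" for j
    unfolding A_def P_def using N I(1,2) that by (rule PiM_rank_exchangeable)
  have "measure P (A i) * real (card I) = (\<Sum>j\<in>I. measure P (A j))"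
    by (simp add: sum.cong[OF refl exch])
  also have "\<dots> = (\<integral>h. (\<Sum>j\<in>I. indicator (A j) h) \<partial>P)"
    using A_sets by (subst Bochner_Integration.integral_sum) (auto simp: P.emeasure_eq_measure)
  also have "\<dots> \<le> (\<integral>h. K \<partial>P)"
  proof (rule integral_mono)
    show "integrable P (\<lambda>h. \<Sum>j\<in>I. indicator (A j) h :: real)"
      using A_sets by (intro Bochner_Integration.integrable_sum integrable_real_indicator)
        (auto simp: P.emeasure_eq_measure)
    fix h assume h: "h \<in> space P"
    have "(\<Sum>j\<in>I. indicator (A j) h :: real) = real (card {j\<in>I. real (card {k\<in>I. h j \<le> h k}) \<le> K})"
      using h I(1) by (simp add: A_def indicator_def sum.If_cases Int_def)
    also have "\<dots> \<le> K"
      using I(1) K by (rule card_rank_le)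
    finally show "(\<Sum>j\<in>I. indicator (A j) h) \<le> K" .
  qed simp
  also have "\<dots> = K"
    by (simp add: P.prob_space)
  finally show ?thesis by (simp add: A_def)
qed

lemma (in prob_space) prob_rank_le:
  fixes H :: "'i \<Rightarrow> 'a \<Rightarrow> real"
  assumes indep: "indep_vars (\<lambda>_. borel) H I" and I: "finite I" "i \<in> I"
    and ident: "\<And>k. k \<in> I \<Longrightarrow> distr M borel (H k) = distr M borel (H i)" and K: "0 \<le> K"
  shows "prob {\<omega>\<in>space M. real (card {k\<in>I. H i \<omega> \<le> H k \<omega>}) \<le> K} * real (card I) \<le> K"
proof -
  let ?P = "PiM I (\<lambda>_. distr M borel (H i))"
  have rv: "random_variable borel (H k)" if "k \<in> I" for k
    using indep that by (simp add: indep_vars_def)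
  have "distr M (PiM I (\<lambda>_. borel)) (\<lambda>\<omega>. \<lambda>k\<in>I. H k \<omega>) = ?P"
  proof -
    have "distr M (PiM I (\<lambda>_. borel)) (\<lambda>\<omega>. \<lambda>k\<in>I. H k \<omega>) = PiM I (\<lambda>k. distr M borel (H k))"
      using indep indep_vars_iff_distr_eq_PiM'[where M'="\<lambda>_. borel" and X=H and I=I] rv I(2) by auto
    also have "\<dots> = ?P"
      by (rule PiM_cong[OF refl ident])
    finally show ?thesis .
  qed
  moreover have "distr M ?P (\<lambda>\<omega>. \<lambda>k\<in>I. H k \<omega>) = distr M (PiM I (\<lambda>_. borel)) (\<lambda>\<omega>. \<lambda>k\<in>I. H k \<omega>)"
    by (rule distr_cong) (auto intro!: sets_PiM_cong)
  ultimately have joint: "distr M ?P (\<lambda>\<omega>. \<lambda>k\<in>I. H k \<omega>) = ?P" by simp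
  have meas: "(\<lambda>\<omega>. \<lambda>k\<in>I. H k \<omega>) \<in> measurable M ?P"
    using rv by (auto intro!: measurable_restrict)
  have "prob {\<omega>\<in>space M. real (card {k\<in>I. H i \<omega> \<le> H k \<omega>}) \<le> K}
      = measure ?P {h \<in> space ?P. real (card {k\<in>I. h i \<le> h k}) \<le> K}"
  proof -
    have "{\<omega>\<in>space M. real (card {k\<in>I. H i \<omega> \<le> H k \<omega>}) \<le> K}
        = (\<lambda>\<omega>. \<lambda>k\<in>I. H k \<omega>) -` {h \<in> space ?P. real (card {k\<in>I. h i \<le> h k}) \<le> K} \<inter> space M"
      using measurable_space[OF meas] I(2) by (auto cong: conj_cong)
    then show ?thesis
      using measure_distr[OF meas sets_PiM_rank[OF sets_distr I]] by (simp add: joint)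
  qed
  also have "\<dots> * real (card I) \<le> K"
    using I K by (intro PiM_rank_le prob_space_distr rv) auto
  finally show ?thesis .
qed

definition rank_pvalue :: "nat \<Rightarrow> real \<Rightarrow> (nat \<Rightarrow> real) \<Rightarrow> real" where
  "rank_pvalue M t s = (1 + real (card {m \<in> {1..M}. \<bar>t\<bar> \<le> \<bar>s m\<bar>})) / (real M + 1)"

lemma p_mx_eq_rank_pvalue:
  "p_mx n M y x xt = rank_pvalue M (\<Sum>i<n. x i * y i) (\<lambda>m. \<Sum>i<n. xt m i * y i)"
  by (simp add: p_mx_def rank_pvalue_def)

lemma rank_pvalue_cong:
  "(\<And>m. m \<in> {1..M} \<Longrightarrow> s m = s' m) \<Longrightarrow> rank_pvalue M t s = rank_pvalue M t s'"
  unfolding rank_pvalue_def by (metis (mono_tags, lifting) mem_Collect_eq)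

lemma p_mx_cong:
  assumes "\<And>i. i < n \<Longrightarrow> y i = y' i" "\<And>i. i < n \<Longrightarrow> x i = x' i"
    "\<And>m i. m \<in> {1..M} \<Longrightarrow> i < n \<Longrightarrow> xt m i = xt' m i"
  shows "p_mx n M y x xt = p_mx n M y' x' xt'"
proof -
  have "(\<Sum>i<n. x i * y i) = (\<Sum>i<n. x' i * y' i)"
    using assms by (intro sum.cong) auto
  moreover have "rank_pvalue M t (\<lambda>m. \<Sum>i<n. xt m i * y i) = rank_pvalue M t (\<lambda>m. \<Sum>i<n. xt' m i * y' i)" for t
    using assms by (intro rank_pvalue_cong sum.cong) auto
  ultimately show ?thesis
    by (simp add: p_mx_eq_rank_pvalue)
qed

lemma rank_pvalue_le_iff:
  assumes "s 0 = t"
  shows "rank_pvalue M t s \<le> \<alpha> \<longleftrightarrow> real (card {k \<in> {0..M}. \<bar>t\<bar> \<le> \<bar>s k\<bar>}) \<le> \<alpha> * (real M + 1)"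
proof -
  have "{k \<in> {0..M}. \<bar>t\<bar> \<le> \<bar>s k\<bar>} = insert 0 {m \<in> {1..M}. \<bar>t\<bar> \<le> \<bar>s m\<bar>}"
    using assms by (auto simp: Suc_le_eq)
  moreover have "card (insert 0 {m \<in> {1..M}. \<bar>t\<bar> \<le> \<bar>s m\<bar>}) = Suc (card {m \<in> {1..M}. \<bar>t\<bar> \<le> \<bar>s m\<bar>})"
    by (rule card_insert_disjoint) auto
  ultimately show ?thesis
    by (simp add: rank_pvalue_def pos_divide_le_eq add_pos_nonneg)
qed

lemma borel_measurable_rank_pvalue:
  assumes "t \<in> borel_measurable N" "\<And>m. m \<in> {1..M} \<Longrightarrow> s m \<in> borel_measurable N"
  shows "(\<lambda>x. rank_pvalue M (t x) (\<lambda>m. s m x)) \<in> borel_measurable N"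
proof -
  have "(\<lambda>x. real (card {m\<in>{1..M}. \<bar>t x\<bar> \<le> \<bar>s m x\<bar>})) \<in> borel_measurable N"
    by (rule borel_measurable_card_Collect)
      (auto simp: pred_def intro!: borel_measurable_le borel_measurable_abs assms)
  then show ?thesis
    unfolding rank_pvalue_def by measurable
qed

lemma (in prob_space) prob_rank_pvalue_le:
  assumes indep: "indep_vars (\<lambda>_. borel) T {0..R}"
    and ident: "\<And>m. m \<le> R \<Longrightarrow> distr M borel (T m) = distr M borel (T 0)" and "0 \<le> \<alpha>"
  shows "prob {\<omega>\<in>space M. rank_pvalue R (T 0 \<omega>) (\<lambda>m. T m \<omega>) \<le> \<alpha>} \<le> \<alpha>"
proof -
  let ?H = "\<lambda>k \<omega>. \<bar>T k \<omega>\<bar>"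
  have rv: "random_variable borel (T m)" if "m \<le> R" for m
    using indep that by (simp add: indep_vars_def)
  have indep_abs: "indep_vars (\<lambda>_. borel) ?H {0..R}"
    using indep by (rule indep_vars_compose2) auto
  have "distr M borel (?H m) = distr (distr M borel (T m)) borel abs" if "m \<le> R" for m
    using rv[OF that] by (subst distr_distr) (auto simp: comp_def)
  then have ident_abs: "distr M borel (?H m) = distr M borel (?H 0)" if "m \<in> {0..R}" for m
    using that ident[of m] by simp
  have "prob {\<omega>\<in>space M. real (card {k\<in>{0..R}. ?H 0 \<omega> \<le> ?H k \<omega>}) \<le> \<alpha> * (real R + 1)}
      * real (card {0..R}) \<le> \<alpha> * (real R + 1)"
    using assms(3) by (intro prob_rank_le[OF indep_abs _ _ ident_abs]) auto
  then show ?thesis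
    by (simp add: rank_pvalue_le_iff add.commute[of 1])
qed

lemma (in prob_space) prob_rank_pvalue_normal_le:
  assumes indep: "indep_vars (\<lambda>_. borel) G {0..R}"
    and normal: "\<And>m. m \<le> R \<Longrightarrow> distributed M lborel (G m) (normal_density 0 \<sigma>)"
    and \<sigma>: "0 < \<sigma>" and \<alpha>: "0 \<le> \<alpha>"
  shows "prob {\<omega>\<in>space M. rank_pvalue R (b + G 0 \<omega>) (\<lambda>m. b + G m \<omega>) \<le> \<alpha>} \<le> \<alpha>"
proof (rule prob_rank_pvalue_le[OF _ _ \<alpha>])
  show "indep_vars (\<lambda>_. borel) (\<lambda>m \<omega>. b + G m \<omega>) {0..R}"
    using indep by (rule indep_vars_compose2) auto
  fix m assume "m \<le> R"
  then show "distr M borel (\<lambda>\<omega>. b + G m \<omega>) = distr M borel (\<lambda>\<omega>. b + G 0 \<omega>)"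
    using distr_normal_density_shift[OF normal \<sigma>] by simp
qed

section \<open>Freezing an independent component\<close>

lemma (in prob_space) indep_vars_compose_blocks:
  assumes indep: "indep_vars M' X I" and K: "\<And>j. j \<in> L \<Longrightarrow> K j \<subseteq> I"
    and disj: "disjoint_family_on K L"
    and F: "\<And>j. j \<in> L \<Longrightarrow> F j \<in> measurable (PiM (K j) M') (N j)"
  shows "indep_vars N (\<lambda>j \<omega>. F j (\<lambda>i\<in>K j. X i \<omega>)) L"
  using indep_vars_compose2[OF indep_vars_restrict[OF indep K disj] F] by simp

lemma (in prob_space) emeasure_distr_vimage_Pair:
  assumes Y: "random_variable MY Y" and F: "F \<in> sets (MX \<Otimes>\<^sub>M MY)"
  shows "emeasure (distr M MY Y) (Pair x -` F) = emeasure M {\<omega>\<in>space M. (x, Y \<omega>) \<in> F}"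
proof -
  have "Y -` (Pair x -` F) \<inter> space M = {\<omega>\<in>space M. (x, Y \<omega>) \<in> F}"
    by auto
  then show ?thesis
    using emeasure_distr[OF Y sets_Pair1[OF F]] by simp
qed

lemma (in prob_space) borel_measurable_emeasure_Collect_Pair:
  assumes Y: "random_variable MY Y" and F: "F \<in> sets (MX \<Otimes>\<^sub>M MY)"
  shows "(\<lambda>x. emeasure M {\<omega>\<in>space M. (x, Y \<omega>) \<in> F}) \<in> borel_measurable MX"
proof -
  have "(\<lambda>x. emeasure (distr M MY Y) (Pair x -` F)) \<in> borel_measurable MX"
    using sigma_finite_measure.measurable_emeasure_Pair[OF prob_space_imp_sigma_finite[OF prob_space_distr[OF Y]]] F
    by (simp add: sets_pair_measure_cong[of MX MX "distr M MY Y" MY])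
  then show ?thesis
    by (simp add: emeasure_distr_vimage_Pair[OF Y F])
qed

lemma (in prob_space) emeasure_indep_var_Collect:
  assumes indep: "indep_var MX X MY Y" and F: "F \<in> sets (MX \<Otimes>\<^sub>M MY)"
  shows "emeasure M {\<omega>\<in>space M. (X \<omega>, Y \<omega>) \<in> F}
       = (\<integral>\<^sup>+x. emeasure M {\<omega>\<in>space M. (x, Y \<omega>) \<in> F} \<partial>distr M MX X)"
proof -
  have X: "random_variable MX X" and Y: "random_variable MY Y"
    using indep by (auto dest: indep_var_rv1 indep_var_rv2)
  have "emeasure M {\<omega>\<in>space M. (X \<omega>, Y \<omega>) \<in> F} = emeasure (distr M (MX \<Otimes>\<^sub>M MY) (\<lambda>\<omega>. (X \<omega>, Y \<omega>))) F"
    using X Y F by (subst emeasure_distr) (auto simp: vimage_def Int_def conj_commute)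
  also have "\<dots> = emeasure (distr M MX X \<Otimes>\<^sub>M distr M MY Y) F"
    using indep by (simp add: indep_var_distribution_eq)
  also have "\<dots> = (\<integral>\<^sup>+x. emeasure (distr M MY Y) (Pair x -` F) \<partial>distr M MX X)"
    using F by (intro sigma_finite_measure.emeasure_pair_measure_alt prob_space_imp_sigma_finite
        prob_space_distr Y)
      (simp add: sets_pair_measure_cong[of "distr M MX X" MX "distr M MY Y" MY])
  finally show ?thesis
    by (simp add: emeasure_distr_vimage_Pair[OF Y F])
qed

lemma (in prob_space) prob_indep_var_le_add:
  assumes indep: "indep_var MX X MY Y" "indep_var MX X MY Y'" and F: "F \<in> sets (MX \<Otimes>\<^sub>M MY)"
    and le: "\<And>x. x \<in> space MX \<Longrightarrow>
      prob {\<omega>\<in>space M. (x, Y \<omega>) \<in> F} \<le> prob {\<omega>\<in>space M. (x, Y' \<omega>) \<in> F} + d"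
    and d: "0 \<le> d"
  shows "prob {\<omega>\<in>space M. (X \<omega>, Y \<omega>) \<in> F} \<le> prob {\<omega>\<in>space M. (X \<omega>, Y' \<omega>) \<in> F} + d"
proof -
  let ?PX = "distr M MX X"
  have "emeasure M {\<omega>\<in>space M. (X \<omega>, Y \<omega>) \<in> F} = (\<integral>\<^sup>+x. emeasure M {\<omega>\<in>space M. (x, Y \<omega>) \<in> F} \<partial>?PX)"
    by (rule emeasure_indep_var_Collect[OF indep(1) F])
  also have "\<dots> \<le> (\<integral>\<^sup>+x. emeasure M {\<omega>\<in>space M. (x, Y' \<omega>) \<in> F} + ennreal d \<partial>?PX)"
    using le d by (intro nn_integral_mono) (simp add: emeasure_eq_measure ennreal_plus[symmetric] del: ennreal_plus)
  also have "\<dots> = (\<integral>\<^sup>+x. emeasure M {\<omega>\<in>space M. (x, Y' \<omega>) \<in> F} \<partial>?PX) + ennreal d"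
  proof -
    have "emeasure ?PX (space MX) = 1"
      using prob_space.emeasure_space_1[OF prob_space_distr[OF indep_var_rv1[OF indep(2)]]] by simp
    then show ?thesis
      using borel_measurable_emeasure_Collect_Pair[OF indep_var_rv2[OF indep(2)] F]
      by (simp add: nn_integral_add)
  qed
  also have "\<dots> = emeasure M {\<omega>\<in>space M. (X \<omega>, Y' \<omega>) \<in> F} + ennreal d"
    by (simp only: emeasure_indep_var_Collect[OF indep(2) F])
  finally show ?thesis
    using d by (simp add: emeasure_eq_measure ennreal_plus[symmetric] del: ennreal_plus)
qed

lemma (in prob_space) prob_indep_var_le_expectation:
  assumes indep: "indep_var MX X MY Y"
    and P: "{x \<in> space (MX \<Otimes>\<^sub>M MY). P (fst x) (snd x)} \<in> sets (MX \<Otimes>\<^sub>M MY)"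
    and f: "f \<in> borel_measurable MX" "integrable M (\<lambda>\<omega>. f (X \<omega>))"
    and bound: "AE \<omega> in M. prob {\<eta>\<in>space M. P (X \<omega>) (Y \<eta>)} \<le> f (X \<omega>)"
  shows "prob {\<omega>\<in>space M. P (X \<omega>) (Y \<omega>)} \<le> expectation (\<lambda>\<omega>. f (X \<omega>))"
proof -
  define F where "F = {x \<in> space (MX \<Otimes>\<^sub>M MY). P (fst x) (snd x)}"
  have X: "random_variable MX X" and Y: "random_variable MY Y"
    using indep by (auto dest: indep_var_rv1 indep_var_rv2)
  have F_iff: "(x, Y \<eta>) \<in> F \<longleftrightarrow> P x (Y \<eta>)" if "x \<in> space MX" "\<eta> \<in> space M" for x \<eta>
    using that measurable_space[OF Y] by (auto simp: F_def space_pair_measure)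
  have "{x \<in> space MX. emeasure M {\<eta>\<in>space M. (x, Y \<eta>) \<in> F} \<le> ennreal (f x)} \<in> sets MX"
    using borel_measurable_emeasure_Collect_Pair[OF Y P[folded F_def]] f(1) by measurable
  then have bound': "AE x in distr M MX X. emeasure M {\<eta>\<in>space M. (x, Y \<eta>) \<in> F} \<le> ennreal (f x)"
    using bound measurable_space[OF X]
    by (subst AE_distr_iff[OF X]) (auto simp: F_iff emeasure_eq_measure ennreal_leI cong: conj_cong)
  have f_nonneg: "AE \<omega> in M. 0 \<le> f (X \<omega>)"
    using bound by eventually_elim (rule order_trans[OF measure_nonneg])
  have "{\<omega>\<in>space M. P (X \<omega>) (Y \<omega>)} = {\<omega>\<in>space M. (X \<omega>, Y \<omega>) \<in> F}"
    using measurable_space[OF X] by (auto simp: F_iff)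
  then have "emeasure M {\<omega>\<in>space M. P (X \<omega>) (Y \<omega>)}
      = (\<integral>\<^sup>+x. emeasure M {\<eta>\<in>space M. (x, Y \<eta>) \<in> F} \<partial>distr M MX X)"
    using emeasure_indep_var_Collect[OF indep P[folded F_def]] by simp
  also have "\<dots> \<le> (\<integral>\<^sup>+x. ennreal (f x) \<partial>distr M MX X)"
    using bound' by (rule nn_integral_mono_AE)
  also have "\<dots> = (\<integral>\<^sup>+\<omega>. ennreal (f (X \<omega>)) \<partial>M)"
    using X f(1) by (simp add: nn_integral_distr)
  also have "\<dots> = ennreal (expectation (\<lambda>\<omega>. f (X \<omega>)))"
    using f(2) f_nonneg by (rule nn_integral_eq_integral)
  finally show ?thesis
    using f_nonneg by (simp add: emeasure_eq_measure integral_nonneg_AE)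
qed

section \<open>The rank test with a shifted Gaussian observation\<close>

lemma (in prob_space) indep_var_head_tail_shift:
  fixes G :: "nat \<Rightarrow> 'a \<Rightarrow> real"
  assumes indep: "indep_vars (\<lambda>_. borel) G {0..R}"
  shows "indep_var (PiM {1..R} (\<lambda>_. borel)) (\<lambda>\<omega>. \<lambda>m\<in>{1..R}. G m \<omega>)
      (PiM {0} (\<lambda>_. borel)) (\<lambda>\<omega>. \<lambda>m\<in>{0}. c + G m \<omega>)"
proof -
  let ?Z = "PiM {0::nat} (\<lambda>_. borel :: real measure)"
  have head_tail: "indep_var (PiM {1..R} (\<lambda>_. borel)) (\<lambda>\<omega>. \<lambda>m\<in>{1..R}. G m \<omega>) ?Z (\<lambda>\<omega>. \<lambda>m\<in>{0}. G m \<omega>)"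
    by (rule indep_var_restrict[OF indep]) auto
  have shift: "(\<lambda>f. \<lambda>m\<in>{0}. c + f m) \<in> measurable ?Z ?Z"
    by measurable
  from indep_var_compose[OF head_tail measurable_ident shift]
  have "indep_var (PiM {1..R} (\<lambda>_. borel)) (\<lambda>\<omega>. \<lambda>m\<in>{1..R}. G m \<omega>)
      ?Z (\<lambda>\<omega>. (\<lambda>f. \<lambda>m\<in>{0}. c + f m) (\<lambda>m\<in>{0}. G m \<omega>))"
    by (simp add: comp_def)
  moreover have "(\<lambda>\<omega>. (\<lambda>f. \<lambda>m\<in>{0}. c + f m) (\<lambda>m\<in>{0}. G m \<omega>)) = (\<lambda>\<omega>. \<lambda>m\<in>{0}. c + G m \<omega>)"
    by (auto simp: fun_eq_iff)
  ultimately show ?thesis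
    by simp
qed

lemma (in prob_space) prob_rank_pvalue_shift_le:
  assumes indep: "indep_vars (\<lambda>_. borel) G {0..R}"
    and normal: "\<And>m. m \<le> R \<Longrightarrow> distributed M lborel (G m) (normal_density 0 \<sigma>)"
    and \<sigma>: "0 < \<sigma>" and \<alpha>: "0 \<le> \<alpha>"
  shows "prob {\<omega>\<in>space M. rank_pvalue R (a + G 0 \<omega>) (\<lambda>m. b + G m \<omega>) \<le> \<alpha>}
     \<le> \<alpha> + \<bar>a - b\<bar> * normal_density 0 \<sigma> 0"
proof -
  \<comment> \<open>indep_var needs components of one type, so G 0 is packed as a one-point family\<close>
  let ?Q = "PiM {1..R} (\<lambda>_. borel :: real measure)"
  let ?Z = "PiM {0::nat} (\<lambda>_. borel :: real measure)"
  define Rs where "Rs \<omega> = (\<lambda>m\<in>{1..R}. G m \<omega>)" for \<omega>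
  define Y where "Y c \<omega> = (\<lambda>m\<in>{0}. c + G m \<omega>)" for c \<omega>
  define F where "F = {x \<in> space (?Q \<Otimes>\<^sub>M ?Z). rank_pvalue R (snd x 0) (\<lambda>m. b + fst x m) \<le> \<alpha>}"
  define S where "S r = {t. rank_pvalue R t (\<lambda>m. b + r m) \<le> \<alpha>}" for r
  have F_sets: "F \<in> sets (?Q \<Otimes>\<^sub>M ?Z)"
  proof -
    have "(\<lambda>x. rank_pvalue R (snd x 0) (\<lambda>m. b + fst x m)) \<in> borel_measurable (?Q \<Otimes>\<^sub>M ?Z)"
      by (rule borel_measurable_rank_pvalue) auto
    then show ?thesis
      unfolding F_def by (rule borel_measurable_le[OF _ borel_measurable_const])
  qed
  have S_sets: "S r \<in> sets borel" for r
  proof -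
    have "(\<lambda>t. rank_pvalue R t (\<lambda>m. b + r m)) \<in> borel_measurable borel"
      by (rule borel_measurable_rank_pvalue) auto
    then show ?thesis
      using borel_measurable_le[OF _ borel_measurable_const, of _ borel \<alpha>] by (simp add: S_def)
  qed
  have indep_Y: "indep_var ?Q Rs ?Z (Y c)" for c
    unfolding Rs_def Y_def using indep by (rule indep_var_head_tail_shift)
  have event: "{\<omega>\<in>space M. rank_pvalue R (c + G 0 \<omega>) (\<lambda>m. b + G m \<omega>) \<le> \<alpha>}
      = {\<omega>\<in>space M. (Rs \<omega>, Y c \<omega>) \<in> F}" for c
  proof -
    have "rank_pvalue R (c + G 0 \<omega>) (\<lambda>m. b + Rs \<omega> m) = rank_pvalue R (c + G 0 \<omega>) (\<lambda>m. b + G m \<omega>)" for \<omega>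
      by (rule rank_pvalue_cong) (simp add: Rs_def)
    moreover have "(Rs \<omega>, Y c \<omega>) \<in> space (?Q \<Otimes>\<^sub>M ?Z)" if "\<omega> \<in> space M" for \<omega>
      using measurable_space[OF indep_var_rv1[OF indep_Y] that] measurable_space[OF indep_var_rv2[OF indep_Y] that]
      by (simp add: space_pair_measure)
    ultimately show ?thesis
      by (auto simp: F_def Y_def)
  qed
  have slice: "{\<omega>\<in>space M. (r, Y c \<omega>) \<in> F} = {\<omega>\<in>space M. c + G 0 \<omega> \<in> S r}" if "r \<in> space ?Q" for c r
    using that measurable_space[OF indep_var_rv2[OF indep_Y]] by (auto simp: F_def S_def Y_def space_pair_measure)
  have "prob {\<omega>\<in>space M. (Rs \<omega>, Y a \<omega>) \<in> F} \<le> prob {\<omega>\<in>space M. (Rs \<omega>, Y b \<omega>) \<in> F} + \<bar>a - b\<bar> * normal_density 0 \<sigma> 0"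
    using prob_normal_shift_le[OF normal[of 0] \<sigma> S_sets]
    by (intro prob_indep_var_le_add[OF indep_Y indep_Y F_sets]) (simp_all add: slice)
  moreover have "prob {\<omega>\<in>space M. rank_pvalue R (b + G 0 \<omega>) (\<lambda>m. b + G m \<omega>) \<le> \<alpha>} \<le> \<alpha>"
    using indep normal \<sigma> \<alpha> by (rule prob_rank_pvalue_normal_le)
  ultimately show ?thesis
    unfolding event by simp
qed

lemma (in prob_space) prob_p_mx_le:
  fixes E :: "nat \<Rightarrow> nat \<Rightarrow> 'a \<Rightarrow> real"
  assumes indep: "indep_vars (\<lambda>_. borel) (\<lambda>p. E (fst p) (snd p)) ({0..R} \<times> {..<n})"
    and normal: "\<And>m i. m \<le> R \<Longrightarrow> i < n \<Longrightarrow> distributed M lborel (E m i) std_normal_density"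
    and y: "\<exists>i<n. y i \<noteq> 0" and \<alpha>: "0 \<le> \<alpha>"
  shows "prob {\<omega>\<in>space M. p_mx n R y (\<lambda>i. u i + E 0 i \<omega>) (\<lambda>m i. w i + E m i \<omega>) \<le> \<alpha>}
     \<le> \<alpha> + 2 / sqrt (2 * pi) * sqrt (\<Sum>i<n. (u i - w i)\<^sup>2)"
proof -
  define \<sigma> where "\<sigma> = sqrt (\<Sum>i<n. (y i)\<^sup>2)"
  define G where "G m \<omega> = (\<Sum>i<n. y i * E m i \<omega>)" for m \<omega>
  have indep_G: "indep_vars (\<lambda>_. borel) G {0..R}"
    using indep_vars_compose_blocks[OF indep, where K="\<lambda>m. {m} \<times> {..<n}" and L="{0..R}"
        and F="\<lambda>m f. \<Sum>i<n. y i * f (m, i)" and N="\<lambda>_. borel"]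
    by (rule indep_vars_cong[THEN iffD1, rotated 3]) (auto simp: G_def disjoint_family_on_def)
  have normal_G: "distributed M lborel (G m) (normal_density 0 \<sigma>)" if "m \<le> R" for m
  proof -
    have "indep_vars (\<lambda>_. borel) (\<lambda>i \<omega>. (\<lambda>p\<in>{(m, i)}. E (fst p) (snd p) \<omega>) (m, i)) {..<n}"
      by (rule indep_vars_compose_blocks[OF indep, where K="\<lambda>i. {(m, i)}" and F="\<lambda>i f. f (m, i)"])
        (use that in \<open>auto simp: disjoint_family_on_def\<close>)
    then have "indep_vars (\<lambda>_. borel) (E m) {..<n}"
      by simp
    then show ?thesis
      unfolding G_def[abs_def] \<sigma>_def using that y
      by (intro distributed_weighted_sum_std_normal normal) auto
  qed
  obtain i0 where "i0 < n" "y i0 \<noteq> 0"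
    using y by blast
  then have \<sigma>: "0 < \<sigma>"
    unfolding \<sigma>_def by (intro real_sqrt_gt_zero sum_pos2[of _ i0]) auto
  have "p_mx n R y (\<lambda>i. u i + E 0 i \<omega>) (\<lambda>m i. w i + E m i \<omega>)
      = rank_pvalue R ((\<Sum>i<n. u i * y i) + G 0 \<omega>) (\<lambda>m. (\<Sum>i<n. w i * y i) + G m \<omega>)" for \<omega>
    by (simp add: p_mx_eq_rank_pvalue G_def sum.distrib[symmetric] algebra_simps)
  then have "prob {\<omega>\<in>space M. p_mx n R y (\<lambda>i. u i + E 0 i \<omega>) (\<lambda>m i. w i + E m i \<omega>) \<le> \<alpha>}
      \<le> \<alpha> + \<bar>(\<Sum>i<n. u i * y i) - (\<Sum>i<n. w i * y i)\<bar> * normal_density 0 \<sigma> 0"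
    using prob_rank_pvalue_shift_le[OF indep_G normal_G \<sigma> \<alpha>] by simp
  also have "\<bar>(\<Sum>i<n. u i * y i) - (\<Sum>i<n. w i * y i)\<bar> * normal_density 0 \<sigma> 0
      \<le> sqrt (\<Sum>i<n. (u i - w i)\<^sup>2) / sqrt (2 * pi)"
    using sum_mult_normal_density_le[OF finite_lessThan, where y=y and v="\<lambda>i. u i - w i"] \<open>i0 < n\<close> \<open>y i0 \<noteq> 0\<close>
    by (auto simp: \<sigma>_def sum_subtractf left_diff_distrib)
  also have "\<dots> \<le> 2 / sqrt (2 * pi) * sqrt (\<Sum>i<n. (u i - w i)\<^sup>2)"
    by (simp add: divide_right_mono sum_nonneg)
  finally show ?thesis by simp
qed

section \<open>The conditional randomization test\<close>

text \<open>The primitive variables have different types. They are embedded into the product type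
  'z * real (with 0 or undefined in the unused component), so that their joint independence becomes
  an instance of indep_vars.\<close>

definition crt_family ::
  "(nat \<Rightarrow> 'w \<Rightarrow> 'z) \<Rightarrow> (nat \<Rightarrow> 'w \<Rightarrow> real) \<Rightarrow> (nat \<Rightarrow> 'w \<Rightarrow> real) \<Rightarrow> (nat \<Rightarrow> nat \<Rightarrow> 'w \<Rightarrow> real)
    \<Rightarrow> crt_idx \<Rightarrow> 'w \<Rightarrow> 'z \<times> real" where
  "crt_family Z eta eps xi j = (case j of
      IZ i \<Rightarrow> (\<lambda>\<omega>. (Z i \<omega>, 0))
    | IEta i \<Rightarrow> (\<lambda>\<omega>. (undefined, eta i \<omega>))
    | IEps i \<Rightarrow> (\<lambda>\<omega>. (undefined, eps i \<omega>))
    | IXi m i \<Rightarrow> (\<lambda>\<omega>. (undefined, xi m i \<omega>)))"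

lemma Collect_vimage_comp_subset:
  assumes h: "h \<in> measurable N K" and g: "g \<in> measurable M N"
  shows "{(\<lambda>\<omega>. h (g \<omega>)) -` A \<inter> space M | A. A \<in> sets K} \<subseteq> {g -` B \<inter> space M | B. B \<in> sets N}"
proof
  fix S assume "S \<in> {(\<lambda>\<omega>. h (g \<omega>)) -` A \<inter> space M | A. A \<in> sets K}"
  then obtain A where A: "A \<in> sets K" "S = (\<lambda>\<omega>. h (g \<omega>)) -` A \<inter> space M"
    by blast
  then have "S = g -` (h -` A \<inter> space N) \<inter> space M"
    using measurable_space[OF g] by auto
  then show "S \<in> {g -` B \<inter> space M | B. B \<in> sets N}"
    using measurable_sets[OF h A(1)] by blast
qed

lemma (in prob_space) indep_vars_crt_family:
  fixes Z :: "nat \<Rightarrow> 'a \<Rightarrow> 'z::topological_space"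
  assumes indep: "crt_indep M n R Z eta eps xi"
    and Z: "\<And>i. i < n \<Longrightarrow> Z i \<in> borel_measurable M"
    and eta: "\<And>i. i < n \<Longrightarrow> eta i \<in> borel_measurable M"
    and eps: "\<And>i. i < n \<Longrightarrow> eps i \<in> borel_measurable M"
    and xi: "\<And>m i. 1 \<le> m \<Longrightarrow> m \<le> R \<Longrightarrow> i < n \<Longrightarrow> xi m i \<in> borel_measurable M"
  shows "indep_vars (\<lambda>_. borel \<Otimes>\<^sub>M borel) (crt_family Z eta eps xi) (crt_index_set n R)"
  unfolding indep_vars_def2
proof safe
  fix j assume "j \<in> crt_index_set n R"
  then show "random_variable (borel \<Otimes>\<^sub>M borel) (crt_family Z eta eps xi j)"
    by (auto simp: crt_index_set_def crt_family_def intro!: measurable_Pair Z eta eps xi)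
next
  have left: "(\<lambda>z. (z, 0 :: real)) \<in> measurable borel (borel \<Otimes>\<^sub>M borel)"
    and right: "Pair (undefined :: 'z) \<in> measurable borel (borel \<Otimes>\<^sub>M borel)"
    by measurable
  show "indep_sets (\<lambda>j. {crt_family Z eta eps xi j -` A \<inter> space M |A. A \<in> sets (borel \<Otimes>\<^sub>M borel)})
      (crt_index_set n R)"
  proof (rule indep_sets_mono_sets[OF indep[unfolded crt_indep_def]])
    fix j assume j: "j \<in> crt_index_set n R"
    show "{crt_family Z eta eps xi j -` A \<inter> space M |A. A \<in> sets (borel \<Otimes>\<^sub>M borel)} \<subseteq> (case j of
          IZ i \<Rightarrow> {Z i -` A \<inter> space M | A. A \<in> sets borel}
        | IEta i \<Rightarrow> {eta i -` A \<inter> space M | A. A \<in> sets borel}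
        | IEps i \<Rightarrow> {eps i -` A \<inter> space M | A. A \<in> sets borel}
        | IXi m i \<Rightarrow> {xi m i -` A \<inter> space M | A. A \<in> sets borel})"
      using j by (cases j) (simp_all add: crt_index_set_def crt_family_def Collect_vimage_comp_subset[OF left]
          Collect_vimage_comp_subset[OF right] Z eta eps xi)
  qed
qed

lemma (in prob_space) indep_vars_crt_noise:
  fixes Z :: "nat \<Rightarrow> 'a \<Rightarrow> 'z::topological_space"
  assumes "crt_indep M n R Z eta eps xi"
    and "\<And>i. i < n \<Longrightarrow> Z i \<in> borel_measurable M" "\<And>i. i < n \<Longrightarrow> eta i \<in> borel_measurable M"
    and "\<And>i. i < n \<Longrightarrow> eps i \<in> borel_measurable M"
    and "\<And>m i. 1 \<le> m \<Longrightarrow> m \<le> R \<Longrightarrow> i < n \<Longrightarrow> xi m i \<in> borel_measurable M"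
  shows "indep_vars (\<lambda>_. borel) (\<lambda>p \<omega>. if fst p = 0 then eps (snd p) \<omega> else xi (fst p) (snd p) \<omega>)
      ({0..R} \<times> {..<n})"
proof -
  define idx where "idx p = (if fst p = 0 then IEps (snd p) else IXi (fst p) (snd p))" for p :: "nat \<times> nat"
  have "indep_vars (\<lambda>_. borel) (\<lambda>p \<omega>. snd ((\<lambda>j\<in>{idx p}. crt_family Z eta eps xi j \<omega>) (idx p)))
      ({0..R} \<times> {..<n})"
    by (rule indep_vars_compose_blocks[OF indep_vars_crt_family[OF assms],
          where K="\<lambda>p. {idx p}" and F="\<lambda>p f. snd (f (idx p))"])
      (auto simp: idx_def crt_index_set_def disjoint_family_on_def split: if_splits)
  then show ?thesis
    by (rule indep_vars_cong[THEN iffD1, rotated 3]) (auto simp: idx_def crt_family_def)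
qed

lemma (in prob_space) prob_p_mx_crt_le:
  fixes Z :: "nat \<Rightarrow> 'a \<Rightarrow> 'z::topological_space"
  assumes indep: "crt_indep M n R Z eta eps xi"
    and Z: "\<And>i. i < n \<Longrightarrow> Z i \<in> borel_measurable M"
    and eta: "\<And>i. i < n \<Longrightarrow> eta i \<in> borel_measurable M"
    and eps: "\<And>i. i < n \<Longrightarrow> distributed M lborel (eps i) std_normal_density"
    and xi: "\<And>m i. 1 \<le> m \<Longrightarrow> m \<le> R \<Longrightarrow> i < n \<Longrightarrow> distributed M lborel (xi m i) std_normal_density"
    and y: "\<exists>i<n. y i \<noteq> 0" and \<alpha>: "0 \<le> \<alpha>"
  shows "prob {\<omega>\<in>space M. p_mx n R y (\<lambda>i. u i + eps i \<omega>) (\<lambda>m i. w i + xi m i \<omega>) \<le> \<alpha>}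
     \<le> \<alpha> + 2 / sqrt (2 * pi) * sqrt (\<Sum>i<n. (u i - w i)\<^sup>2)"
proof -
  define E where "E m i \<omega> = (if m = 0 then eps i \<omega> else xi m i \<omega>)" for m i \<omega>
  have "p_mx n R y (\<lambda>i. u i + eps i \<omega>) (\<lambda>m i. w i + xi m i \<omega>) = p_mx n R y (\<lambda>i. u i + E 0 i \<omega>) (\<lambda>m i. w i + E m i \<omega>)"
    for \<omega>
    by (rule p_mx_cong) (simp_all add: E_def)
  moreover have "prob {\<omega>\<in>space M. p_mx n R y (\<lambda>i. u i + E 0 i \<omega>) (\<lambda>m i. w i + E m i \<omega>) \<le> \<alpha>}
      \<le> \<alpha> + 2 / sqrt (2 * pi) * sqrt (\<Sum>i<n. (u i - w i)\<^sup>2)"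
  proof (rule prob_p_mx_le[OF _ _ y \<alpha>])
    show "indep_vars (\<lambda>_. borel) (\<lambda>p. E (fst p) (snd p)) ({0..R} \<times> {..<n})"
      unfolding E_def[abs_def] using indep Z eta
    proof (rule indep_vars_crt_noise)
      show "eps i \<in> borel_measurable M" if "i < n" for i
        using distributed_measurable[OF eps[OF that]] by simp
      show "xi m i \<in> borel_measurable M" if "1 \<le> m" "m \<le> R" "i < n" for m i
        using distributed_measurable[OF xi[OF that]] by simp
    qed
    show "distributed M lborel (E m i) std_normal_density" if "m \<le> R" "i < n" for m i
      using that eps xi by (cases "m = 0") (simp_all add: E_def[abs_def])
  qed
  ultimately show ?thesis
    by simp
qed

lemma borel_measurable_p_mx:
  assumes "\<And>i. i < n \<Longrightarrow> (\<lambda>x. y x i) \<in> borel_measurable N" "\<And>i. i < n \<Longrightarrow> (\<lambda>x. u x i) \<in> borel_measurable N"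
    "\<And>m i. m \<in> {1..R} \<Longrightarrow> i < n \<Longrightarrow> (\<lambda>x. v x m i) \<in> borel_measurable N"
  shows "(\<lambda>x. p_mx n R (y x) (u x) (v x)) \<in> borel_measurable N"
  unfolding p_mx_eq_rank_pvalue using assms
  by (intro borel_measurable_rank_pvalue borel_measurable_sum borel_measurable_times) auto

lemma (in prob_space) prob_p_mx_le_expectation:
  fixes Z :: "nat \<Rightarrow> 'a \<Rightarrow> 'z::topological_space" and mu_y mu_x mu_mx :: "'z \<Rightarrow> real"
  assumes indep: "crt_indep M n R Z eta eps xi"
    and [measurable]: "mu_y \<in> borel_measurable borel" "mu_x \<in> borel_measurable borel"
      "mu_mx \<in> borel_measurable borel"
    and Z: "\<And>i. i < n \<Longrightarrow> Z i \<in> borel_measurable M"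
    and eta: "\<And>i. i < n \<Longrightarrow> eta i \<in> borel_measurable M"
    and eps: "\<And>i. i < n \<Longrightarrow> distributed M lborel (eps i) std_normal_density"
    and xi: "\<And>m i. 1 \<le> m \<Longrightarrow> m \<le> R \<Longrightarrow> i < n \<Longrightarrow> distributed M lborel (xi m i) std_normal_density"
    and y: "AE \<omega> in M. \<exists>i<n. mu_y (Z i \<omega>) + eta i \<omega> \<noteq> 0" and \<alpha>: "0 \<le> \<alpha>"
    and int: "integrable M (\<lambda>\<omega>. sqrt (\<Sum>i<n. (mu_x (Z i \<omega>) - mu_mx (Z i \<omega>))\<^sup>2))"
  shows "prob {\<omega>\<in>space M. p_mx n R (\<lambda>i. mu_y (Z i \<omega>) + eta i \<omega>) (\<lambda>i. mu_x (Z i \<omega>) + eps i \<omega>)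
                              (\<lambda>m i. mu_mx (Z i \<omega>) + xi m i \<omega>) \<le> \<alpha>}
     \<le> \<alpha> + 2 / sqrt (2 * pi) * expectation (\<lambda>\<omega>. sqrt (\<Sum>i<n. (mu_x (Z i \<omega>) - mu_mx (Z i \<omega>))\<^sup>2))"
proof -
  \<comment> \<open>condition on the data block D = (Z, eta); the noise block N = (eps, xi) is independent of it\<close>
  define KZ where "KZ = {IZ i | i. i < n} \<union> {IEta i | i. i < n}"
  define KX where "KX = {IEps i | i. i < n} \<union> {IXi m i | m i. 1 \<le> m \<and> m \<le> R \<and> i < n}"
  let ?QZ = "PiM KZ (\<lambda>_. borel \<Otimes>\<^sub>M borel :: ('z \<times> real) measure)"
  let ?QX = "PiM KX (\<lambda>_. borel \<Otimes>\<^sub>M borel :: ('z \<times> real) measure)"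
  define D where "D \<omega> = (\<lambda>j\<in>KZ. crt_family Z eta eps xi j \<omega>)" for \<omega>
  define N where "N \<omega> = (\<lambda>j\<in>KX. crt_family Z eta eps xi j \<omega>)" for \<omega>
  define z where "z a i = fst (a (IZ i))" for a :: "crt_idx \<Rightarrow> 'z \<times> real" and i
  define Y where "Y a i = mu_y (z a i) + snd (a (IEta i))" for a i
  define P where "P a b = (p_mx n R (Y a) (\<lambda>i. mu_x (z a i) + snd (b (IEps i)))
      (\<lambda>m i. mu_mx (z a i) + snd (b (IXi m i))) \<le> \<alpha>)" for a b :: "crt_idx \<Rightarrow> 'z \<times> real"
  define f where "f a = \<alpha> + 2 / sqrt (2 * pi) * sqrt (\<Sum>i<n. (mu_x (z a i) - mu_mx (z a i))\<^sup>2)" for a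
  have "\<And>i. i < n \<Longrightarrow> eps i \<in> borel_measurable M"
    "\<And>m i. 1 \<le> m \<Longrightarrow> m \<le> R \<Longrightarrow> i < n \<Longrightarrow> xi m i \<in> borel_measurable M"
    using distributed_measurable[OF eps] distributed_measurable[OF xi] by simp_all
  then have indep_DN: "indep_var ?QZ D ?QX N"
    unfolding D_def N_def using indep_vars_crt_family[OF indep Z eta]
    by (intro indep_var_restrict) (auto simp: KZ_def KX_def crt_index_set_def)
  have D: "z (D \<omega>) i = Z i \<omega>" "Y (D \<omega>) i = mu_y (Z i \<omega>) + eta i \<omega>" if "i < n" for \<omega> i
    using that by (simp_all add: D_def z_def Y_def KZ_def crt_family_def)
  have P: "P a (N \<eta>) \<longleftrightarrow> p_mx n R (Y a) (\<lambda>i. mu_x (z a i) + eps i \<eta>) (\<lambda>m i. mu_mx (z a i) + xi m i \<eta>) \<le> \<alpha>"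
    for a \<eta>
    unfolding P_def by (intro arg_cong2[where f="(\<le>)"] p_mx_cong) (auto simp: N_def KX_def crt_family_def)
  have "prob {\<omega>\<in>space M. P (D \<omega>) (N \<omega>)} \<le> expectation (\<lambda>\<omega>. f (D \<omega>))"
  proof (rule prob_indep_var_le_expectation[OF indep_DN])
    show "{x \<in> space (?QZ \<Otimes>\<^sub>M ?QX). P (fst x) (snd x)} \<in> sets (?QZ \<Otimes>\<^sub>M ?QX)"
      unfolding P_def
      by (intro borel_measurable_le borel_measurable_const borel_measurable_p_mx) (auto simp: z_def Y_def KZ_def KX_def)
    show "f \<in> borel_measurable ?QZ"
      unfolding f_def[abs_def] z_def KZ_def by measurable
    show "integrable M (\<lambda>\<omega>. f (D \<omega>))"
      using int by (simp add: f_def D)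
    have "prob {\<eta>\<in>space M. P (D \<omega>) (N \<eta>)} \<le> f (D \<omega>)" if "\<exists>i<n. mu_y (Z i \<omega>) + eta i \<omega> \<noteq> 0" for \<omega>
      unfolding P f_def using that by (intro prob_p_mx_crt_le[OF indep Z eta eps xi _ \<alpha>]) (auto simp: D)
    then show "AE \<omega> in M. prob {\<eta>\<in>space M. P (D \<omega>) (N \<eta>)} \<le> f (D \<omega>)"
      using y by auto
  qed
  moreover have "P (D \<omega>) (N \<omega>) \<longleftrightarrow> p_mx n R (\<lambda>i. mu_y (Z i \<omega>) + eta i \<omega>) (\<lambda>i. mu_x (Z i \<omega>) + eps i \<omega>)
      (\<lambda>m i. mu_mx (Z i \<omega>) + xi m i \<omega>) \<le> \<alpha>" for \<omega>
    unfolding P by (intro arg_cong2[where f="(\<le>)"] p_mx_cong) (simp_all add: D)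
  moreover have "expectation (\<lambda>\<omega>. f (D \<omega>))
      = \<alpha> + 2 / sqrt (2 * pi) * expectation (\<lambda>\<omega>. sqrt (\<Sum>i<n. (mu_x (Z i \<omega>) - mu_mx (Z i \<omega>))\<^sup>2))"
    using int by (simp add: f_def D prob_space)
  ultimately show ?thesis
    by simp
qed

lemma (in prob_space) integrable_sqrt:
  fixes X :: "'a \<Rightarrow> real"
  assumes X: "integrable M X" "AE x in M. 0 \<le> X x"
  shows "integrable M (\<lambda>x. sqrt (X x))"
proof (rule Bochner_Integration.integrable_bound)
  show "integrable M (\<lambda>x. X x + 1)"
    using X(1) by simp
  show "(\<lambda>x. sqrt (X x)) \<in> borel_measurable M"
    using borel_measurable_integrable[OF X(1)] by measurable
  show "AE x in M. norm (sqrt (X x)) \<le> norm (X x + 1)"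
    using X(2)
  proof eventually_elim
    case (elim x)
    have "0 \<le> (sqrt (X x) - 1)\<^sup>2"
      by simp
    then have "2 * sqrt (X x) \<le> X x + 1"
      using elim by (simp add: power2_diff)
    then show ?case
      using elim by simp
  qed
qed

lemma (in prob_space) expectation_sqrt_le:
  fixes X :: "'a \<Rightarrow> real"
  assumes X: "integrable M X" "AE x in M. 0 \<le> X x"
  shows "expectation (\<lambda>x. sqrt (X x)) \<le> sqrt (expectation X)"
proof (rule real_le_rsqrt)
  have sq: "AE x in M. (sqrt (X x))\<^sup>2 = X x"
    using X(2) by eventually_elim simp
  have meas: "X \<in> borel_measurable M"
    using X(1) by (rule borel_measurable_integrable)
  have "integrable M (\<lambda>x. (sqrt (X x))\<^sup>2) = integrable M X"
    using meas sq by (intro integrable_cong_AE) measurable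
  then have int_sq: "integrable M (\<lambda>x. (sqrt (X x))\<^sup>2)"
    using X(1) by simp
  \<comment> \<open>the variance of sqrt X is nonnegative\<close>
  have "0 \<le> expectation (\<lambda>x. (sqrt (X x))\<^sup>2) - (expectation (\<lambda>x. sqrt (X x)))\<^sup>2"
    using variance_positive[of "\<lambda>x. sqrt (X x)"] variance_eq[OF integrable_sqrt[OF X] int_sq] by simp
  then show "(expectation (\<lambda>x. sqrt (X x)))\<^sup>2 \<le> expectation X"
    using integral_cong_AE[OF _ meas sq] meas by simp
qed

theorem mainTheorem5:
  fixes \<Omega> :: "'w measure"
    and n M :: nat and \<alpha> :: real
    and Z :: "nat \<Rightarrow> 'w \<Rightarrow> real ^ 'p"
    and eta eps :: "nat \<Rightarrow> 'w \<Rightarrow> real"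
    and xi :: "nat \<Rightarrow> nat \<Rightarrow> 'w \<Rightarrow> real"
    and mu_y mu_x mu_mx :: "real ^ 'p \<Rightarrow> real"
    and PZ :: "(real ^ 'p) measure" and Peta :: "real measure"
  assumes "prob_space \<Omega>"
    and "M \<ge> 1" and "0 < \<alpha>" and "\<alpha> < 1"
    and "mu_y \<in> borel_measurable borel" and "mu_x \<in> borel_measurable borel"
    and "mu_mx \<in> borel_measurable borel"
    and "\<And>i. i < n \<Longrightarrow> Z i \<in> borel_measurable \<Omega>"
    and "\<And>i. i < n \<Longrightarrow> eta i \<in> borel_measurable \<Omega>"
    and "\<And>i. i < n \<Longrightarrow> distr \<Omega> borel (Z i) = PZ"
    and "\<And>i. i < n \<Longrightarrow> distr \<Omega> borel (eta i) = Peta"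
    and "\<And>i. i < n \<Longrightarrow> integrable \<Omega> (eta i) \<and> integral\<^sup>L \<Omega> (eta i) = 0"
    and "\<And>i. i < n \<Longrightarrow> distributed \<Omega> lborel (eps i) (\<lambda>t. ennreal (std_normal_density t))"
    and "\<And>m i. 1 \<le> m \<Longrightarrow> m \<le> M \<Longrightarrow> i < n \<Longrightarrow>
           distributed \<Omega> lborel (xi m i) (\<lambda>t. ennreal (std_normal_density t))"
    and "crt_indep \<Omega> n M Z eta eps xi"
    and "AE \<omega> in \<Omega>. (\<exists>i<n. mu_y (Z i \<omega>) + eta i \<omega> \<noteq> 0)"
    and "integrable PZ (\<lambda>z. (mu_x z - mu_mx z)\<^sup>2)"
  shows "measure \<Omega> {\<omega> \<in> space \<Omega>.
            p_mx n M (\<lambda>i. mu_y (Z i \<omega>) + eta i \<omega>) (\<lambda>i. mu_x (Z i \<omega>) + eps i \<omega>)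
                 (\<lambda>m i. mu_mx (Z i \<omega>) + xi m i \<omega>) \<le> \<alpha>}
         \<le> \<alpha> + 2 / sqrt (2 * pi) * sqrt (real n * (\<integral>z. (mu_x z - mu_mx z)\<^sup>2 \<partial>PZ))"
proof -
  interpret prob_space \<Omega> by fact
  define g where "g z = (mu_x z - mu_mx z)\<^sup>2" for z
  define T where "T \<omega> = (\<Sum>i<n. g (Z i \<omega>))" for \<omega>
  have g: "g \<in> borel_measurable borel"
    unfolding g_def[abs_def] using assms(6,7) by measurable
  have int_g: "integrable \<Omega> (\<lambda>\<omega>. g (Z i \<omega>))" if "i < n" for i
    using integrable_distr_eq[OF assms(8)[OF that] g] assms(10)[OF that] assms(17)
    by (simp add: g_def[abs_def])
  have exp_g: "expectation (\<lambda>\<omega>. g (Z i \<omega>)) = (\<integral>z. g z \<partial>PZ)" if "i < n" for i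
    using integral_distr[OF assms(8)[OF that] g] assms(10)[OF that] by simp
  have T: "integrable \<Omega> T" "AE \<omega> in \<Omega>. 0 \<le> T \<omega>"
    unfolding T_def using int_g by (auto simp: g_def intro!: sum_nonneg)
  have "measure \<Omega> {\<omega> \<in> space \<Omega>.
            p_mx n M (\<lambda>i. mu_y (Z i \<omega>) + eta i \<omega>) (\<lambda>i. mu_x (Z i \<omega>) + eps i \<omega>)
                 (\<lambda>m i. mu_mx (Z i \<omega>) + xi m i \<omega>) \<le> \<alpha>}
      \<le> \<alpha> + 2 / sqrt (2 * pi) * expectation (\<lambda>\<omega>. sqrt (T \<omega>))"
    using prob_p_mx_le_expectation[OF assms(15,5,6,7,8,9,13,14,16)] assms(3) integrable_sqrt[OF T]
    by (simp add: T_def g_def)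
  also have "\<dots> \<le> \<alpha> + 2 / sqrt (2 * pi) * sqrt (expectation T)"
    using expectation_sqrt_le[OF T] by (intro add_left_mono mult_left_mono) auto
  also have "expectation T = real n * (\<integral>z. g z \<partial>PZ)"
    unfolding T_def using int_g exp_g by (simp add: Bochner_Integration.integral_sum)
  finally show ?thesis
    by (simp add: g_def)
qed

end
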